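(* \[ \sum_{n=0}^\infty\frac{p(n)\,(-2^{24})^n}{(2n+1)^5(6n+1)^5(6n+5)^5\binom{6n}{3n}^5}=\frac{189}{2}\zeta(3), \] where \[ p(n)=491287680n^{12}+3517115904n^{11}+11399133888n^{10}+22100247360n^9+28522562400n^8+25791650640n^7 \] \[ +16738310448n^6+7846312104n^5+2633313600n^4+616193160n^3+95283770n^2+8729374n+357931. \]
   Context: $\zeta$ is the Riemann zeta function. *)

theory Defs
  imports "HOL-Analysis.Analysis"
begin

definition zeta :: "real \<Rightarrow> real" where
  "zeta s = (\<Sum>n. 1 / (real (Suc n)) powr s)"

definition p18 :: "nat \<Rightarrow> real" where
  "p18 n = (let x = real n in
     491287680*x^12 + 3517115904*x^11 + 11399133888*x^10 + 22100247360*x^9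
   + 28522562400*x^8 + 25791650640*x^7 + 16738310448*x^6 + 7846312104*x^5
   + 2633313600*x^4 + 616193160*x^3 + 95283770*x^2 + 8729374*x + 357931)"

end

theory Submission
  imports Defs "HOL-Real_Asymp.Real_Asymp"
begin

text \<open>
  Markov-WZ acceleration. Put r(j,k) = (1/2)_k / (j+3/2)_k (Pochhammer symbols),
  F(j,k) = (j+2k+1) r(j,k)^4, G(j,k) = -g(j,k) r(j,k)^4 with g quadratic in k, and
  a(j) = 8(j+1)^5 / ((2j+1)(2j+3)^4). Then F(j,k) + a(j) F(j+1,k) = G(j,k+1) - G(j,k), and
  summing over k gives W(j) + a(j) W(j+1) = g(j,0) for W(j) = sum_k F(j,k), with
  W(0) = sum_k 1/(2k+1)^3 = 7/8 zeta(3). The weights c(j) = prod_{i<j} (-a(i)) are bounded by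
  2^-j while W(j) grows only linearly, so telescoping in j yields sum_j c(j) g(j,0) = 7/8 zeta(3).
  Grouping this series into blocks j = 3n, 3n+1, 3n+2 gives 1/108 of the n-th term of the
  series in the theorem; the binomial coefficients enter through c(3n).
\<close>

lemma suminf_add_mult_telescope:
  fixes f g G :: "nat \<Rightarrow> 'a::real_normed_field"
  assumes "summable f" "summable g"
    and "\<And>k. f k + a * g k = G (Suc k) - G k" and "G \<longlonglongrightarrow> 0"
  shows "suminf f + a * suminf g = - G 0"
proof -
  have "(\<lambda>k. f k + a * g k) sums (suminf f + a * suminf g)"
    using assms(1,2) by (intro sums_add sums_mult summable_sums)
  moreover have "(\<lambda>k. f k + a * g k) sums (0 - G 0)"
    unfolding assms(3) by (rule telescope_sums[OF assms(4)])
  ultimately show ?thesis by (simp add: sums_unique2)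
qed

lemma sums_recurrence_telescope:
  fixes W a b :: "nat \<Rightarrow> 'a::real_normed_field"
  assumes rec: "\<And>j. W j + a j * W (Suc j) = b j"
    and lim: "(\<lambda>j. (\<Prod>i<j. - a i) * W j) \<longlonglongrightarrow> 0"
  shows "(\<lambda>j. (\<Prod>i<j. - a i) * b j) sums W 0"
proof -
  have "(\<lambda>j. (\<Prod>i<j. - a i) * W j - (\<Prod>i<Suc j. - a i) * W (Suc j))
      sums ((\<Prod>i<0. - a i) * W 0 - 0)"
    by (rule telescope_sums'[OF lim])
  moreover have
    "(\<Prod>i<j. - a i) * W j - (\<Prod>i<Suc j. - a i) * W (Suc j) = (\<Prod>i<j. - a i) * b j" for j
    by (simp add: rec[symmetric] algebra_simps)
  ultimately show ?thesis by simp
qed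

lemma sums_odd_powr_zeta:
  assumes "s > 1"
  shows "(\<lambda>k. 1 / (2 * real k + 1) powr s) sums ((1 - 2 powr - s) * zeta s)"
proof -
  define f where "f n = 1 / real (Suc n) powr s" for n
  have "summable (\<lambda>n. real n powr - s)"
    using assms by (simp add: summable_real_powr_iff)
  then have "summable f"
    unfolding f_def by (subst (asm) summable_Suc_iff[symmetric]) (simp add: powr_minus_divide)
  then have f: "f sums zeta s"
    unfolding zeta_def f_def by (simp add: summable_sums)
  have "(\<lambda>n. sum f {n * 2..<n * 2 + 2}) sums zeta s"
    by (rule sums_group[OF f]) simp
  moreover have "sum f {n * 2..<n * 2 + 2} = 1 / (2 * real n + 1) powr s + 2 powr - s * f n" for n
  proof -
    have "real (Suc (2 * n + 1)) powr s = 2 powr s * real (Suc n) powr s"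
      using powr_mult[of 2 "real (Suc n)" s] by (simp add: algebra_simps)
    then have "f (2 * n + 1) = 2 powr - s * f n"
      unfolding f_def by (simp add: powr_minus_divide)
    then show ?thesis
      by (simp add: numeral_2_eq_2 mult.commute f_def add.commute)
  qed
  ultimately have "(\<lambda>n. 1 / (2 * real n + 1) powr s + 2 powr - s * f n) sums zeta s"
    by simp
  from sums_diff[OF this sums_mult[OF f, of "2 powr - s"]] show ?thesis
    by (simp add: algebra_simps)
qed

lemma sums_odd_cube_zeta: "(\<lambda>k. 1 / (2 * real k + 1) ^ 3) sums (7 / 8 * zeta 3)"
proof -
  have "(1 - 2 powr - 3) = (7 / 8 :: real)"
    by (simp add: powr_minus powr_realpow)
  with sums_odd_powr_zeta[of 3] show ?thesis
    by (simp add: powr_realpow)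
qed

definition wz_r :: "nat \<Rightarrow> nat \<Rightarrow> real" where
  "wz_r j k = pochhammer (1 / 2) k / pochhammer (real j + 3 / 2) k"

definition wz_F :: "nat \<Rightarrow> nat \<Rightarrow> real" where
  "wz_F j k = (real j + 2 * real k + 1) * wz_r j k ^ 4"

definition wz_g :: "nat \<Rightarrow> nat \<Rightarrow> real" where
  "wz_g j k = (4 * real k ^ 2 + (12 * real j + 8) * real k + 10 * real j ^ 2 + 14 * real j + 5)
     / (4 * (2 * real j + 1))"

definition wz_G :: "nat \<Rightarrow> nat \<Rightarrow> real" where
  "wz_G j k = - wz_g j k * wz_r j k ^ 4"

definition wz_a :: "nat \<Rightarrow> real" where
  "wz_a j = 8 * (real j + 1) ^ 5 / ((2 * real j + 1) * (2 * real j + 3) ^ 4)"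

definition wz_c :: "nat \<Rightarrow> real" where
  "wz_c j = (\<Prod>i<j. - wz_a i)"

lemma wz_r_0 [simp]: "wz_r j 0 = 1"
  by (simp add: wz_r_def)

lemma wz_r_Suc: "wz_r j (Suc k) = wz_r j k * (2 * real k + 1) / (2 * real j + 2 * real k + 3)"
proof -
  have "wz_r j (Suc k) = wz_r j k * ((1 / 2 + real k) / (real j + 3 / 2 + real k))"
    unfolding wz_r_def pochhammer_rec' by (simp add: times_divide_times_eq ac_simps)
  also have "(1 / 2 + real k) / (real j + 3 / 2 + real k)
      = (2 * real k + 1) / (2 * real j + 2 * real k + 3)"
    by (simp add: divide_simps) (simp add: algebra_simps)
  finally show ?thesis by simp
qed

lemma wz_r_Suc_left: "wz_r (Suc j) k = wz_r j k * (2 * real j + 3) / (2 * real j + 2 * real k + 3)"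
proof -
  define z where "z = real j + 3 / 2"
  have "z > 0"
    unfolding z_def by simp
  then have "pochhammer (z + 1) k = pochhammer z k * ((z + real k) / z)"
    using pochhammer_rec[of z k] pochhammer_rec'[of z k] by (simp add: field_simps)
  moreover have "wz_r (Suc j) k = pochhammer (1 / 2) k / pochhammer (z + 1) k"
    unfolding wz_r_def z_def by (simp add: algebra_simps)
  ultimately have "wz_r (Suc j) k = wz_r j k * (z / (z + real k))"
    unfolding wz_r_def z_def by simp
  also have "z / (z + real k) = (2 * real j + 3) / (2 * real j + 2 * real k + 3)"
    unfolding z_def by (simp add: divide_simps) (simp add: algebra_simps)
  finally show ?thesis by simp
qed

lemma wz_r_0_left: "wz_r 0 k = 1 / (2 * real k + 1)"
  by (induction k) (simp_all add: wz_r_Suc field_simps)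

lemma wz_r_nonneg: "0 \<le> wz_r j k"
  by (simp add: wz_r_def pochhammer_nonneg)

lemma wz_r_le: "wz_r j k \<le> 1 / (2 * real k + 1)"
proof (induction j)
  case 0
  then show ?case by (simp add: wz_r_0_left)
next
  case (Suc j)
  have "(2 * real j + 3) / (2 * real j + 2 * real k + 3) \<le> 1"
    by simp
  with Suc wz_r_nonneg[of j k] show ?case
    unfolding wz_r_Suc_left times_divide_eq_right[symmetric]
    by (meson mult_left_le order_trans)
qed

lemma wz_pair: "wz_F j k + wz_a j * wz_F (Suc j) k = wz_G j (Suc k) - wz_G j k"
proof -
  define x y r where "x = real j" and "y = real k" and "r = wz_r j k"
  define a b D where "a = 2 * x + 1" and "b = 2 * x + 3" and "D = 2 * x + 2 * y + 3"
  define N where "N = (\<lambda>y. 4 * y ^ 2 + (12 * x + 8) * y + 10 * x ^ 2 + 14 * x + 5)"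
  have "x \<ge> 0" "y \<ge> 0"
    unfolding x_def y_def by simp_all
  then have nz: "a \<noteq> 0" "b \<noteq> 0" "D \<noteq> 0"
    unfolding a_def b_def D_def by linarith+
  have "wz_F j k + wz_a j * wz_F (Suc j) k
    = r ^ 4 * ((x + 2 * y + 1) + 8 * (x + 1) ^ 5 / (a * b ^ 4) * (x + 2 * y + 2) * (b / D) ^ 4)"
    unfolding wz_F_def wz_a_def wz_r_Suc_left of_nat_Suc
      x_def[symmetric] y_def[symmetric] r_def[symmetric]
      a_def[symmetric] b_def[symmetric] D_def[symmetric]
    using nz by (simp add: power_divide power_mult_distrib field_simps)
  also have "\<dots> = r ^ 4 * (N y / (4 * a) - N (y + 1) / (4 * a) * ((2 * y + 1) / D) ^ 4)"
    using nz by (simp add: field_simps power_divide) (simp add: N_def a_def b_def D_def, algebra)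
  also have "\<dots> = wz_G j (Suc k) - wz_G j k"
    unfolding wz_G_def wz_g_def wz_r_Suc of_nat_Suc
      x_def[symmetric] y_def[symmetric] r_def[symmetric] a_def[symmetric] D_def[symmetric]
      power_divide power_mult_distrib
    using nz by (simp add: N_def field_simps)
  finally show ?thesis .
qed

lemma wz_F_nonneg: "0 \<le> wz_F j k"
  by (simp add: wz_F_def wz_r_nonneg)

lemma wz_F_le: "wz_F j k \<le> (real j + 1) / (2 * real k + 1) ^ 3"
proof -
  have "wz_r j k ^ 4 \<le> (1 / (2 * real k + 1)) ^ 4"
    by (intro power_mono wz_r_le wz_r_nonneg)
  moreover have "real j + 2 * real k + 1 \<le> (real j + 1) * (2 * real k + 1)"
    by (simp add: algebra_simps)
  ultimately have "wz_F j k \<le> (real j + 1) * (2 * real k + 1) * (1 / (2 * real k + 1)) ^ 4"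
    unfolding wz_F_def by (intro mult_mono) auto
  also have "\<dots> = (real j + 1) / (2 * real k + 1) ^ 3"
    by (simp add: power_divide divide_simps power_Suc[symmetric])
  finally show ?thesis .
qed

lemma wz_F_0_left: "wz_F 0 = (\<lambda>k. 1 / (2 * real k + 1) ^ 3)"
proof
  fix k
  show "wz_F 0 k = 1 / (2 * real k + 1) ^ 3"
    by (simp add: wz_F_def wz_r_0_left power_divide divide_simps power_Suc[symmetric])
qed

lemma sums_wz_F_bound:
  "(\<lambda>k. (real j + 1) / (2 * real k + 1) ^ 3) sums ((real j + 1) * (7 / 8 * zeta 3))"
  using sums_mult[OF sums_odd_cube_zeta, of "real j + 1"] by simp

lemma summable_wz_F: "summable (wz_F j)"
  by (rule summable_comparison_test'[OF sums_summable[OF sums_wz_F_bound[of j]]])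
    (simp add: wz_F_nonneg wz_F_le)

lemma suminf_wz_F_le: "suminf (wz_F j) \<le> (real j + 1) * (7 / 8 * zeta 3)"
  by (rule sums_le[OF _ summable_sums[OF summable_wz_F] sums_wz_F_bound]) (simp add: wz_F_le)

lemma wz_G_tendsto_0: "wz_G j \<longlonglongrightarrow> 0"
proof (rule Lim_null_comparison)
  show "\<forall>\<^sub>F k in sequentially.
      norm (wz_G j k) \<le> wz_g j k * (1 / (2 * real k + 1)) ^ 4"
  proof (intro always_eventually allI)
    fix k
    have "wz_g j k \<ge> 0"
      by (simp add: wz_g_def)
    moreover have "wz_r j k ^ 4 \<le> (1 / (2 * real k + 1)) ^ 4"
      by (intro power_mono wz_r_le wz_r_nonneg)
    ultimately show "norm (wz_G j k) \<le> wz_g j k * (1 / (2 * real k + 1)) ^ 4"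
      unfolding wz_G_def by (simp add: abs_mult wz_r_nonneg mult_left_mono)
  qed
  show "(\<lambda>k. wz_g j k * (1 / (2 * real k + 1)) ^ 4) \<longlonglongrightarrow> 0"
    unfolding wz_g_def by real_asymp
qed

lemma wz_recurrence: "suminf (wz_F j) + wz_a j * suminf (wz_F (Suc j)) = wz_g j 0"
  using suminf_add_mult_telescope[OF summable_wz_F summable_wz_F wz_pair wz_G_tendsto_0]
  by (simp add: wz_G_def)

lemma wz_a_nonneg: "0 \<le> wz_a j"
  by (simp add: wz_a_def)

lemma wz_a_le: "wz_a j \<le> 1 / 2"
proof -
  have "16 * (real j + 1) ^ 5 = (real j + 1) * (2 * real j + 2) ^ 4"
    by algebra
  also have "\<dots> \<le> (2 * real j + 1) * (2 * real j + 3) ^ 4"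
    by (intro mult_mono power_mono) auto
  finally show ?thesis
    by (simp add: wz_a_def divide_simps)
qed

lemma wz_c_0 [simp]: "wz_c 0 = 1"
  by (simp add: wz_c_def)

lemma wz_c_Suc [simp]: "wz_c (Suc j) = - wz_a j * wz_c j"
  by (simp add: wz_c_def)

lemma abs_wz_c_le: "\<bar>wz_c j\<bar> \<le> (1 / 2) ^ j"
proof -
  have "\<bar>wz_c j\<bar> = (\<Prod>i<j. wz_a i)"
    by (simp add: wz_c_def abs_prod wz_a_nonneg)
  also have "\<dots> \<le> (\<Prod>i<j. 1 / 2)"
    by (intro prod_mono conjI wz_a_nonneg wz_a_le)
  finally show ?thesis by simp
qed

lemma wz_c_suminf_wz_F_tendsto_0: "(\<lambda>j. wz_c j * suminf (wz_F j)) \<longlonglongrightarrow> 0"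
proof (rule Lim_null_comparison)
  define bound where "bound j = (1 / 2) ^ j * ((real j + 1) * (7 / 8 * zeta 3))" for j
  show "\<forall>\<^sub>F j in sequentially. norm (wz_c j * suminf (wz_F j)) \<le> bound j"
  proof (intro always_eventually allI)
    fix j
    have "0 \<le> suminf (wz_F j)"
      by (intro suminf_nonneg summable_wz_F wz_F_nonneg)
    then have "norm (wz_c j * suminf (wz_F j)) = \<bar>wz_c j\<bar> * suminf (wz_F j)"
      by (simp add: abs_mult)
    also have "\<dots> \<le> bound j"
      unfolding bound_def using \<open>0 \<le> suminf (wz_F j)\<close>
      by (intro mult_mono abs_wz_c_le suminf_wz_F_le) simp_all
    finally show "norm (wz_c j * suminf (wz_F j)) \<le> bound j" .
  qed
  show "bound \<longlonglongrightarrow> 0"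
    unfolding bound_def by real_asymp
qed

lemma sums_wz_c_wz_g: "(\<lambda>j. wz_c j * wz_g j 0) sums (7 / 8 * zeta 3)"
proof -
  have "(\<lambda>j. wz_c j * wz_g j 0) sums suminf (wz_F 0)"
    unfolding wz_c_def
    by (rule sums_recurrence_telescope[OF wz_recurrence
          wz_c_suminf_wz_F_tendsto_0[unfolded wz_c_def]])
  moreover have "suminf (wz_F 0) = 7 / 8 * zeta 3"
    unfolding wz_F_0_left using sums_odd_cube_zeta by (simp add: sums_iff)
  ultimately show ?thesis by simp
qed

lemma central_binomial_Suc:
  "(2 * n + 2 choose (n + 1)) * (n + 1) = 2 * (2 * n + 1) * (2 * n choose n)"
proof -
  have "(n + 1) * ((2 * n + 2 choose (n + 1)) * (n + 1))
      = (n + 1) * (2 * n + 2 choose (n + 1)) * (n + 1)"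
    by (simp only: ac_simps)
  also have "\<dots> = (2 * n + 2) * ((n + 1) * (2 * n + 1 choose (n + 1)))"
    using Suc_times_binomial[of n "2 * n + 1"] binomial_symmetric[of n "2 * n + 1"]
    by (simp del: binomial_Suc_Suc)
  also have "\<dots> = (n + 1) * (2 * (2 * n + 1) * (2 * n choose n))"
    using Suc_times_binomial[of n "2 * n"] by (simp del: binomial_Suc_Suc)
  finally show ?thesis
    by (metis mult_cancel1 add_is_0 one_neq_zero)
qed

lemma central_binomial_6_Suc:
  "(6 * m + 6 choose (3 * m + 3)) * ((3 * m + 1) * (3 * m + 2) * (3 * m + 3))
    = 8 * (6 * m + 1) * (6 * m + 3) * (6 * m + 5) * (6 * m choose (3 * m))"
proof -
  have "2 * (3 * m) = 6 * m" "2 * (3 * m + 1) = 6 * m + 2" "2 * (3 * m + 2) = 6 * m + 4"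
    "6 * m + 2 + 2 = 6 * m + 4" "6 * m + 2 + 1 = 6 * m + 3"
    "6 * m + 4 + 2 = 6 * m + 6" "6 * m + 4 + 1 = 6 * m + 5"
    "3 * m + 1 + 1 = 3 * m + 2" "3 * m + 2 + 1 = 3 * m + 3"
    by simp_all
  note arith = this
  have c1: "(6 * m + 2 choose (3 * m + 1)) * (3 * m + 1)
      = 2 * (6 * m + 1) * (6 * m choose (3 * m))"
    using central_binomial_Suc[of "3 * m"] unfolding arith .
  have c2: "(6 * m + 4 choose (3 * m + 2)) * (3 * m + 2)
      = 2 * (6 * m + 3) * (6 * m + 2 choose (3 * m + 1))"
    using central_binomial_Suc[of "3 * m + 1"] unfolding arith .
  have c3: "(6 * m + 6 choose (3 * m + 3)) * (3 * m + 3)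
      = 2 * (6 * m + 5) * (6 * m + 4 choose (3 * m + 2))"
    using central_binomial_Suc[of "3 * m + 2"] unfolding arith .
  have "(6 * m + 6 choose (3 * m + 3)) * ((3 * m + 1) * (3 * m + 2) * (3 * m + 3))
      = ((6 * m + 6 choose (3 * m + 3)) * (3 * m + 3)) * (3 * m + 2) * (3 * m + 1)"
    by (simp only: ac_simps)
  also have "\<dots> = 2 * (6 * m + 5) * ((6 * m + 4 choose (3 * m + 2)) * (3 * m + 2))
      * (3 * m + 1)"
    unfolding c3 by (simp only: ac_simps)
  also have "\<dots> = 2 * (6 * m + 5) * (2 * (6 * m + 3))
      * ((6 * m + 2 choose (3 * m + 1)) * (3 * m + 1))"
    unfolding c2 by (simp only: ac_simps)
  also have "\<dots> = 8 * (6 * m + 1) * (6 * m + 3) * (6 * m + 5) * (6 * m choose (3 * m))"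
    unfolding c1 by (simp add: algebra_simps)
  finally show ?thesis .
qed

lemma wz_c_mult_3:
  "wz_c (3 * m) = (- (2 ^ 24)) ^ m / ((6 * real m + 1) ^ 4 * real (6 * m choose (3 * m)) ^ 5)"
proof (induction m)
  case 0
  then show ?case by simp
next
  case (Suc m)
  define x B B' where "x = real m" and "B = real (6 * m choose (3 * m))"
    and "B' = real (6 * m + 6 choose (3 * m + 3))"
  define a1 a3 a5 a7 q1 q2 q3 where "a1 = 6 * x + 1" and "a3 = 6 * x + 3" and "a5 = 6 * x + 5"
    and "a7 = 6 * x + 7" and "q1 = 3 * x + 1" and "q2 = 3 * x + 2" and "q3 = 3 * x + 3"
  have "x \<ge> 0" "B > 0"
    unfolding x_def B_def by simp_all
  then have nz: "a1 \<noteq> 0" "a3 \<noteq> 0" "a5 \<noteq> 0" "a7 \<noteq> 0"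
    "q1 \<noteq> 0" "q2 \<noteq> 0" "q3 \<noteq> 0" "B \<noteq> 0"
    unfolding a1_def a3_def a5_def a7_def q1_def q2_def q3_def by linarith+
  have "B' * (q1 * q2 * q3) = 8 * a1 * a3 * a5 * B"
    using arg_cong[OF central_binomial_6_Suc[of m], of real]
    unfolding B_def B'_def x_def a1_def a3_def a5_def q1_def q2_def q3_def
    by (simp add: algebra_simps)
  then have B': "B' = 8 * a1 * a3 * a5 * B / (q1 * q2 * q3)"
    using nz by (simp add: field_simps)
  have "3 * Suc m = Suc (Suc (Suc (3 * m)))"
    by simp
  then have "wz_c (3 * Suc m)
      = wz_c (3 * m) * (- wz_a (3 * m)) * (- wz_a (3 * m + 1)) * (- wz_a (3 * m + 2))"
    by (simp only: wz_c_Suc) (simp add: ac_simps)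
  also have "\<dots> = (- (2 ^ 24)) ^ m / (a1 ^ 4 * B ^ 5) * (- (8 * q1 ^ 5 / (a1 * a3 ^ 4)))
      * (- (8 * q2 ^ 5 / (a3 * a5 ^ 4))) * (- (8 * q3 ^ 5 / (a5 * a7 ^ 4)))"
    unfolding Suc.IH wz_a_def B_def[symmetric]
    by (simp add: x_def a1_def a3_def a5_def a7_def q1_def q2_def q3_def algebra_simps)
  also have "\<dots> = (- (2 ^ 24)) ^ Suc m / (a7 ^ 4 * B' ^ 5)"
    unfolding B' using nz by (simp add: field_simps) algebra
  also have "\<dots> = (- (2 ^ 24)) ^ Suc m
      / ((6 * real (Suc m) + 1) ^ 4 * real (6 * Suc m choose (3 * Suc m)) ^ 5)"
    by (simp add: a7_def x_def B'_def algebra_simps)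
  finally show ?case .
qed

lemma wz_g_block:
  "wz_g (3 * m) 0 - wz_a (3 * m) * wz_g (3 * m + 1) 0
      + wz_a (3 * m) * wz_a (3 * m + 1) * wz_g (3 * m + 2) 0
    = p18 m / (108 * (2 * real m + 1) ^ 5 * (6 * real m + 1) * (6 * real m + 5) ^ 5)"
proof -
  define x where "x = real m"
  define h a1 a5 where "h = 2 * x + 1" and "a1 = 6 * x + 1" and "a5 = 6 * x + 5"
  have "x \<ge> 0"
    unfolding x_def by simp
  then have nz: "h \<noteq> 0" "a1 \<noteq> 0" "a5 \<noteq> 0"
    unfolding h_def a1_def a5_def by linarith+
  have "wz_g (3 * m) 0 - wz_a (3 * m) * wz_g (3 * m + 1) 0
      + wz_a (3 * m) * wz_a (3 * m + 1) * wz_g (3 * m + 2) 0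
    = (90 * x ^ 2 + 42 * x + 5) / (4 * a1)
      - 8 * (3 * x + 1) ^ 5 / (a1 * (3 * h) ^ 4) * ((90 * x ^ 2 + 102 * x + 29) / (4 * (3 * h)))
      + 8 * (3 * x + 1) ^ 5 / (a1 * (3 * h) ^ 4) * (8 * (3 * x + 2) ^ 5 / (3 * h * a5 ^ 4))
        * ((90 * x ^ 2 + 162 * x + 73) / (4 * a5))"
    unfolding wz_g_def wz_a_def
    by (simp add: x_def h_def a1_def a5_def algebra_simps power2_eq_square)
  also have "\<dots> = p18 m / (108 * h ^ 5 * a1 * a5 ^ 5)"
    using nz
    by (simp add: field_simps) (simp add: p18_def Let_def x_def h_def a1_def a5_def, algebra)
  finally show ?thesis
    by (simp add: x_def h_def a1_def a5_def)
qed

lemma p18_summand_eq_block: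
  "p18 m * (- ((2::real) ^ 24)) ^ m /
      ((2 * real m + 1) ^ 5 * (6 * real m + 1) ^ 5 * (6 * real m + 5) ^ 5
        * real ((6 * m) choose (3 * m)) ^ 5)
    = 108 * (\<Sum>j\<in>{m * 3..<m * 3 + 3}. wz_c j * wz_g j 0)"
proof -
  define h a1 a5 B where "h = 2 * real m + 1" and "a1 = 6 * real m + 1" and "a5 = 6 * real m + 5"
    and "B = real ((6 * m) choose (3 * m))"
  have nz: "h \<noteq> 0" "a1 \<noteq> 0" "a5 \<noteq> 0" "B \<noteq> 0"
    unfolding h_def a1_def a5_def B_def by simp_all
  have "(\<Sum>j\<in>{m * 3..<m * 3 + 3}. wz_c j * wz_g j 0)
      = wz_c (3 * m) * (wz_g (3 * m) 0 - wz_a (3 * m) * wz_g (3 * m + 1) 0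
          + wz_a (3 * m) * wz_a (3 * m + 1) * wz_g (3 * m + 2) 0)"
    by (simp add: eval_nat_numeral algebra_simps)
  also have "\<dots> = (- (2 ^ 24)) ^ m / (a1 ^ 4 * B ^ 5) * (p18 m / (108 * h ^ 5 * a1 * a5 ^ 5))"
    unfolding wz_g_block wz_c_mult_3 h_def a1_def a5_def B_def ..
  finally have block: "(\<Sum>j\<in>{m * 3..<m * 3 + 3}. wz_c j * wz_g j 0)
      = (- (2 ^ 24)) ^ m / (a1 ^ 4 * B ^ 5) * (p18 m / (108 * h ^ 5 * a1 * a5 ^ 5))" .
  show ?thesis
    unfolding block h_def[symmetric] a1_def[symmetric] a5_def[symmetric] B_def[symmetric]
    using nz by (simp add: field_simps) (simp add: power_Suc[symmetric])
qed

theorem mainTheorem18: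
  shows "(\<lambda>n. p18 n * (- ((2::real) ^ 24)) ^ n /
           ((2 * real n + 1) ^ 5 * (6 * real n + 1) ^ 5 * (6 * real n + 5) ^ 5
            * real ((6 * n) choose (3 * n)) ^ 5))
         sums (189 / 2 * zeta 3)"
proof -
  have "(\<lambda>m. \<Sum>j\<in>{m * 3..<m * 3 + 3}. wz_c j * wz_g j 0) sums (7 / 8 * zeta 3)"
    by (rule sums_group[OF sums_wz_c_wz_g]) simp
  from sums_mult[OF this, of 108] show ?thesis
    unfolding p18_summand_eq_block by simp
qed

end
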